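(* Let $\mathbf{u}=(u_n)_{n\in\mathbb{N}}$ be a strictly increasing sequence of positive integers with $Q_\mathbf{u}<\infty$. Then the topology $\tau_\mathbf{u}$ on $\mathbb{T}$ is discrete; more precisely, $B^{\varrho_\mathbf{u}}_{1/(2Q_\mathbf{u})}(0)=\{0\}$ in $\mathbb{T}$.
   Context: $\mathbb{T}=\mathbb{R}/\mathbb{Z}$, $\|x\|$ is the distance from $x$ to the nearest integer and $d(x,y)=\|x-y\|$. The ratios of $\mathbf{u}$ are $q_0=u_0$ and $q_n=u_n/u_{n-1}$ for $n>0$; $Q_\mathbf{u}=\sup_n q_n$. For $x,y\in\mathbb{T}$, $\varrho_\mathbf{u}(x,y)=\sup_n\max\{d(x,y),d(u_nx,u_ny)\}$; $\tau_\mathbf{u}$ is the topology on $\mathbb{T}$ induced by this metric and $B^{\varrho_\mathbf{u}}_\varepsilon(0)=\{x\in\mathbb{T}:\varrho_\mathbf{u}(x,0)<\varepsilon\}$. *)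

theory Defs
  imports Complex_Main
begin

text \<open>Points of the circle T = R/Z are represented by real numbers; two reals
  represent the same point of T iff their difference is an integer.\<close>

definition tnorm :: "real \<Rightarrow> real" where
  "tnorm x = \<bar>x - of_int (round x)\<bar>"

definition tdist :: "real \<Rightarrow> real \<Rightarrow> real" where
  "tdist x y = tnorm (x - y)"

definition ratio :: "(nat \<Rightarrow> nat) \<Rightarrow> nat \<Rightarrow> real" where
  "ratio u n = (if n = 0 then real (u 0) else real (u n) / real (u (n - 1)))"

definition Qsup :: "(nat \<Rightarrow> nat) \<Rightarrow> real" where
  "Qsup u = (SUP n. ratio u n)"

definition rho :: "(nat \<Rightarrow> nat) \<Rightarrow> real \<Rightarrow> real \<Rightarrow> real" where
  "rho u x y = (SUP n. max (tdist x y) (tdist (real (u n) * x) (real (u n) * y)))"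

end

theory Submission
  imports Defs
begin

text \<open>If x is not an integer, put t = \<parallel>x\<parallel> > 0 and Q = Q_u. When t < 1/(2Q), take the
  first n with u_n t \<ge> 1/(2Q). Since u_n \<le> Q u_(n-1) (and u_0 \<le> Q), also u_n t < 1/2, so
  multiplying by u_n causes no wrap-around: \<parallel>u_n x\<parallel> = u_n t \<ge> 1/(2Q). Hence
  \<rho>(x,0) \<ge> 1/(2Q) off the integers, while \<rho> vanishes on them; translation invariance
  of \<rho> then describes every ball.\<close>

lemma tnorm_le_half: "tnorm x \<le> 1/2"
  unfolding tnorm_def using of_int_round_abs_le[of x] by linarith

lemma tnorm_nonneg: "0 \<le> tnorm x"
  unfolding tnorm_def by simp

lemma tnorm_le_dist_int: "tnorm x \<le> \<bar>x - of_int m\<bar>"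
  unfolding tnorm_def by (rule round_diff_minimal)

lemma tnorm_minus: "tnorm (- x) = tnorm x"
  using tnorm_le_dist_int[of "- x" "- round x"] tnorm_le_dist_int[of x "- round (- x)"]
  unfolding tnorm_def by simp

lemma tnorm_eq_0_iff: "tnorm x = 0 \<longleftrightarrow> x \<in> \<int>"
  unfolding tnorm_def by (auto elim: Ints_cases) (metis Ints_of_int)

lemma tnorm_eq_abs_diff_int: "\<bar>x - of_int m\<bar> < 1/2 \<Longrightarrow> tnorm x = \<bar>x - of_int m\<bar>"
  unfolding tnorm_def using round_unique'[of x m] by simp

lemma tnorm_mult_of_nat:
  assumes "real m * tnorm x < 1/2"
  shows "tnorm (real m * x) = real m * tnorm x"
proof -
  have "\<bar>real m * x - of_int (int m * round x)\<bar> = real m * tnorm x"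
    unfolding tnorm_def by (simp add: abs_mult right_diff_distrib[symmetric])
  with assms show ?thesis
    using tnorm_eq_abs_diff_int[of "real m * x" "int m * round x"] by simp
qed

lemma bounded_ratio_seq_hits_interval:
  fixes v :: "nat \<Rightarrow> real"
  assumes unbounded: "\<not> bdd_above (range v)"
    and "0 < Q" and v0: "v 0 \<le> Q" and step: "\<And>n. v (Suc n) \<le> Q * v n"
    and "0 < t" and "t < \<epsilon>"
  shows "\<exists>n. \<epsilon> \<le> v n * t \<and> v n * t < Q * \<epsilon>"
proof -
  have "\<exists>n. \<epsilon> \<le> v n * t"
  proof -
    obtain n where "\<epsilon> / t < v n"
      using unbounded by (meson bdd_aboveI2 not_le)
    then show ?thesis using \<open>0 < t\<close> by (auto simp: divide_less_eq intro!: exI[of _ n])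
  qed
  define n where "n = (LEAST n. \<epsilon> \<le> v n * t)"
  have crossed: "\<epsilon> \<le> v n * t"
    unfolding n_def using \<open>\<exists>n. \<epsilon> \<le> v n * t\<close> by (rule LeastI_ex)
  have "v n * t < Q * \<epsilon>"
  proof (cases n)
    case 0
    have "v 0 * t \<le> Q * t" using v0 \<open>0 < t\<close> by simp
    also have "\<dots> < Q * \<epsilon>" using \<open>t < \<epsilon>\<close> \<open>0 < Q\<close> by simp
    finally show ?thesis using 0 by simp
  next
    case (Suc m)
    have "m < n" using Suc by simp
    then have "\<not> \<epsilon> \<le> v m * t"
      unfolding n_def by (rule not_less_Least)
    have "v n * t \<le> Q * (v m * t)" using step[of m] Suc \<open>0 < t\<close> by simp
    also have "\<dots> < Q * \<epsilon>" using \<open>\<not> \<epsilon> \<le> v m * t\<close> \<open>0 < Q\<close> by simp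
    finally show ?thesis .
  qed
  with crossed show ?thesis by blast
qed

lemma ratio_le_Qsup: "bdd_above (range (ratio u)) \<Longrightarrow> ratio u n \<le> Qsup u"
  unfolding Qsup_def by (rule cSUP_upper) auto

lemma Qsup_ge_1:
  assumes "\<And>n. u n > 0" and "bdd_above (range (ratio u))"
  shows "1 \<le> Qsup u"
  using ratio_le_Qsup[OF assms(2), of 0] assms(1)[of 0] by (simp add: ratio_def)

lemma Suc_le_Qsup_mult:
  assumes "\<And>n. u n > 0" and "bdd_above (range (ratio u))"
  shows "real (u (Suc n)) \<le> Qsup u * real (u n)"
  using ratio_le_Qsup[OF assms(2), of "Suc n"] assms(1)[of n]
  by (simp add: ratio_def divide_le_eq mult.commute)

lemma rho_0_eq: "rho u x 0 = (SUP n. max (tnorm x) (tnorm (real (u n) * x)))"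
  unfolding rho_def tdist_def by simp

lemma rho_eq_rho_diff: "rho u x y = rho u (y - x) 0"
proof -
  have "tnorm (real (u n) * x - real (u n) * y) = tnorm (real (u n) * (y - x))" for n
    using tnorm_minus[of "real (u n) * (y - x)"] by (simp add: algebra_simps)
  moreover have "tnorm (x - y) = tnorm (y - x)"
    using tnorm_minus[of "y - x"] by simp
  ultimately show ?thesis
    unfolding rho_def tdist_def by simp
qed

lemma max_tnorm_le_rho: "max (tnorm x) (tnorm (real (u n) * x)) \<le> rho u x 0"
  unfolding rho_0_eq
  by (rule cSUP_upper) (simp, metis bdd_aboveI2 max.bounded_iff tnorm_le_half)

lemma tnorm_mult_le_rho: "tnorm (real (u n) * x) \<le> rho u x 0"
  and tnorm_le_rho: "tnorm x \<le> rho u x 0"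
  using max_tnorm_le_rho[of x u n] by simp_all

lemma rho_0_of_Ints:
  assumes "x \<in> \<int>"
  shows "rho u x 0 = 0"
proof -
  have "real (u n) * x \<in> \<int>" for n using assms by simp
  with assms show ?thesis by (simp add: rho_0_eq tnorm_eq_0_iff[THEN iffD2])
qed

lemma rho_ge_of_notin_Ints:
  assumes "strict_mono u" and pos: "\<And>n. u n > 0" and bdd: "bdd_above (range (ratio u))"
    and "x \<notin> \<int>"
  shows "1 / (2 * Qsup u) \<le> rho u x 0"
proof (cases "1 / (2 * Qsup u) \<le> tnorm x")
  case True
  then show ?thesis using tnorm_le_rho[of x u] by linarith
next
  case False
  have "0 < tnorm x"
    using \<open>x \<notin> \<int>\<close> tnorm_eq_0_iff[of x] tnorm_nonneg[of x] by linarith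
  have unbounded: "\<not> bdd_above (range (\<lambda>n. real (u n)))"
  proof
    assume "bdd_above (range (\<lambda>n. real (u n)))"
    then obtain B where B: "\<And>n. real (u n) \<le> B" by (auto simp: bdd_above_def)
    obtain n :: nat where "B < real n" using reals_Archimedean2 by blast
    then show False
      using B[of n] strict_mono_imp_increasing[OF \<open>strict_mono u\<close>, of n] by linarith
  qed
  have "0 < Qsup u" "real (u 0) \<le> Qsup u"
    using Qsup_ge_1[OF pos bdd] ratio_le_Qsup[OF bdd, of 0] by (simp_all add: ratio_def)
  moreover have "tnorm x < 1 / (2 * Qsup u)" using False by simp
  ultimately obtain n where n: "1 / (2 * Qsup u) \<le> real (u n) * tnorm x"
    "real (u n) * tnorm x < Qsup u * (1 / (2 * Qsup u))"
    using bounded_ratio_seq_hits_interval[OF unbounded _ _ Suc_le_Qsup_mult[OF pos bdd]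
        \<open>0 < tnorm x\<close>]
    by blast
  then have "tnorm (real (u n) * x) = real (u n) * tnorm x"
    using Qsup_ge_1[OF pos bdd] by (intro tnorm_mult_of_nat) simp
  with n(1) show ?thesis using tnorm_mult_le_rho[of u n x] by linarith
qed

theorem propositionB:
  fixes u :: "nat \<Rightarrow> nat"
  assumes "strict_mono u"
    and "\<And>n. u n > 0"
    and "bdd_above (range (ratio u))"
  shows "{x::real. rho u x 0 < 1 / (2 * Qsup u)} = \<int>
    \<and> (\<forall>x::real. {y. rho u x y < 1 / (2 * Qsup u)} = {y. y - x \<in> \<int>})"
proof -
  have "0 < 1 / (2 * Qsup u)" using Qsup_ge_1[OF assms(2,3)] by simp
  then have ball_0: "rho u z 0 < 1 / (2 * Qsup u) \<longleftrightarrow> z \<in> \<int>" for z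
    using rho_ge_of_notin_Ints[OF assms, of z] rho_0_of_Ints[of z u] by fastforce
  have "{y. rho u x y < 1 / (2 * Qsup u)} = {y. y - x \<in> \<int>}" for x
    by (simp only: rho_eq_rho_diff[of u x] ball_0)
  then show ?thesis
    by (simp add: ball_0)
qed

end
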